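(* Let $n\ge3$ and $\beta=\frac n{n-2}$. For every $x\ge0$ the infinite product $\prod_{i=0}^\infty\left(1+\frac{\beta^i}{\sqrt{2\beta^i-1}}x\right)^{\beta^{-i}}$ converges, defining a continuous function $\xi(x)$ on $[0,\infty)$, and $$\xi(x)\le e^{\frac n2\cdot\frac x{1+x}}(1+x)^{n/2}\quad\text{for all }x\ge0.$$ *)

theory Defs
  imports "HOL-Analysis.Analysis"
begin

end

theory Submission
  imports Defs
begin

text \<open>
  Write \<open>c\<^sub>i = \<beta>\<^sup>i / sqrt (2\<beta>\<^sup>i - 1)\<close> and \<open>q = sqrt (1/\<beta>)\<close>. Since \<open>2\<beta>\<^sup>i - 1 \<ge> \<beta>\<^sup>i\<close>, we have
  \<open>c\<^sub>i / \<beta>\<^sup>i \<le> q\<^sup>i\<close>, so the logarithms \<open>ln (1 + c\<^sub>i x) / \<beta>\<^sup>i \<le> q\<^sup>i x\<close> of the factors form a series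
  dominated by a geometric one, locally uniformly in \<open>x\<close>; this gives convergence and
  continuity. For the bound, concavity of \<open>ln\<close> at \<open>1 + x\<close> gives
  \<open>ln (1 + c\<^sub>i x) \<le> ln (1 + x) + (c\<^sub>i - 1) x/(1 + x)\<close>. Summing with weights \<open>\<beta>\<^sup>-\<^sup>i\<close> yields
  \<open>B ln (1 + x) + (1/(1 - q) - B) x/(1 + x)\<close> with \<open>B = \<beta>/(\<beta> - 1) = n/2\<close>, and
  \<open>1/(1 - q) = (1 + q) B \<le> 2B\<close>.
\<close>

lemma ln_one_plus_mult_le:
  fixes a x :: real
  assumes "a \<ge> 0" "x \<ge> 0"
  shows "ln (1 + a * x) \<le> ln (1 + x) + (a - 1) * (x / (1 + x))"
proof -
  have pos: "1 + a * x > 0" using assms by (simp add: add_pos_nonneg)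
  have "ln (1 + a * x) - ln (1 + x) = ln ((1 + a * x) / (1 + x))"
    using pos assms by (simp add: ln_div)
  also have "\<dots> \<le> (1 + a * x) / (1 + x) - 1"
    using pos assms by (intro ln_le_minus_one) auto
  also have "\<dots> = (a - 1) * (x / (1 + x))"
    using assms by (simp add: field_simps)
  finally show ?thesis by simp
qed

lemma continuous_on_suminf_dominated_halfline:
  fixes f :: "real \<Rightarrow> nat \<Rightarrow> real"
  assumes cont: "\<And>i. continuous_on {0..} (\<lambda>x. f x i)"
    and dom: "\<And>x i. x \<ge> 0 \<Longrightarrow> norm (f x i) \<le> g i * x"
    and "summable g"
  shows "continuous_on {0..} (\<lambda>x. suminf (f x))"
proof -
  have g0: "g i \<ge> 0" for i
    using dom[of 1 i] by simp
  have cont_R: "continuous_on {0..R} (\<lambda>x. suminf (f x))" for R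
  proof (rule uniform_limit_theorem)
    show "uniform_limit {0..R} (\<lambda>n x. \<Sum>i<n. f x i) (\<lambda>x. suminf (f x)) sequentially"
    proof (rule Weierstrass_m_test)
      show "norm (f x i) \<le> g i * R" if "x \<in> {0..R}" for i x
        using dom[of x i] mult_left_mono[of x R "g i"] g0[of i] that by auto
      show "summable (\<lambda>i. g i * R)"
        using \<open>summable g\<close> by (rule summable_mult2)
    qed
    show "\<forall>\<^sub>F n in sequentially. continuous_on {0..R} (\<lambda>x. \<Sum>i<n. f x i)"
      using cont by (intro always_eventually allI continuous_on_sum)
        (auto intro: continuous_on_subset[of "{0..}"])
  qed simp
  show ?thesis
    unfolding continuous_on_eq_continuous_within
  proof
    fix x :: real assume x: "x \<in> {0..}"
    have "continuous (at x within {0..x+1}) (\<lambda>x. suminf (f x))"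
      using cont_R[of "x+1"] x by (simp add: continuous_on_eq_continuous_within)
    moreover have "at x within {0..x+1} = at x within {0..}"
      by (rule at_within_nhd[where S="{..<x+1}"]) auto
    ultimately show "continuous (at x within {0..}) (\<lambda>x. suminf (f x))"
      by simp
  qed
qed

lemma inverse_one_minus_sqrt_inverse_le:
  fixes b :: real
  assumes "b > 1"
  shows "1 / (1 - sqrt (1 / b)) \<le> 2 * (b / (b - 1))"
proof -
  define q where "q = sqrt (1 / b)"
  have q: "0 < q" "q < 1" "q * q = 1 / b"
    using assms by (auto simp: q_def)
  have "1 / (1 - q) = (1 + q) / (1 - 1 / b)"
    using q assms by (simp add: field_simps)
  also have "\<dots> \<le> 2 / (1 - 1 / b)"
    using q assms by (intro divide_right_mono) auto
  also have "\<dots> = 2 * (b / (b - 1))"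
    using assms by (simp add: field_simps)
  finally show ?thesis by (simp add: q_def)
qed

definition xi_coeff :: "real \<Rightarrow> nat \<Rightarrow> real" where
  "xi_coeff b i = b ^ i / sqrt (2 * b ^ i - 1)"

definition xi_log_term :: "real \<Rightarrow> real \<Rightarrow> nat \<Rightarrow> real" where
  "xi_log_term b x i = ln (1 + xi_coeff b i * x) / b ^ i"

lemma xi_coeff_nonneg:
  assumes "b \<ge> 1"
  shows "xi_coeff b i \<ge> 0"
proof -
  have "b ^ i \<ge> 1" using assms by simp
  then show ?thesis unfolding xi_coeff_def by (intro divide_nonneg_nonneg) auto
qed

lemma xi_factor_pos: "b \<ge> 1 \<Longrightarrow> x \<ge> 0 \<Longrightarrow> 1 + xi_coeff b i * x > 0"
  using xi_coeff_nonneg[of b i] by (simp add: add_pos_nonneg)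

lemma xi_coeff_div_power_le:
  assumes "b \<ge> 1"
  shows "xi_coeff b i / b ^ i \<le> sqrt (1 / b) ^ i"
proof -
  have bi: "b ^ i \<ge> 1" using assms by simp
  have "xi_coeff b i / b ^ i = 1 / sqrt (2 * b ^ i - 1)"
    using bi assms by (simp add: xi_coeff_def)
  also have "\<dots> \<le> 1 / sqrt (b ^ i)"
    using bi by (intro divide_left_mono) auto
  also have "\<dots> = sqrt (1 / b) ^ i"
    by (simp add: real_sqrt_power real_sqrt_divide power_one_over)
  finally show ?thesis .
qed

lemma xi_factor_eq_exp:
  assumes "b \<ge> 1" "x \<ge> 0"
  shows "(1 + xi_coeff b i * x) powr (1 / b ^ i) = exp (xi_log_term b x i)"
  using xi_factor_pos[OF assms, of i] by (simp add: powr_def xi_log_term_def)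

lemma xi_log_term_nonneg: "b \<ge> 1 \<Longrightarrow> x \<ge> 0 \<Longrightarrow> xi_log_term b x i \<ge> 0"
  using xi_coeff_nonneg[of b i] by (simp add: xi_log_term_def)

lemma xi_log_term_le:
  assumes "b \<ge> 1" "x \<ge> 0"
  shows "xi_log_term b x i \<le> sqrt (1 / b) ^ i * x"
proof -
  have "xi_log_term b x i \<le> xi_coeff b i * x / b ^ i"
    unfolding xi_log_term_def using xi_coeff_nonneg[OF assms(1)] assms
    by (intro divide_right_mono ln_add_one_self_le_self) auto
  also have "\<dots> = xi_coeff b i / b ^ i * x" by simp
  also have "\<dots> \<le> sqrt (1 / b) ^ i * x"
    using xi_coeff_div_power_le[OF assms(1)] assms(2) by (intro mult_right_mono) auto
  finally show ?thesis .
qed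

lemma summable_sqrt_inverse_power: "b > 1 \<Longrightarrow> summable (\<lambda>i. sqrt (1 / b) ^ i)"
  by (intro summable_geometric) auto

lemma summable_xi_log_term:
  assumes "b > 1" "x \<ge> 0"
  shows "summable (xi_log_term b x)"
proof (rule summable_comparison_test)
  show "\<exists>N. \<forall>i\<ge>N. norm (xi_log_term b x i) \<le> sqrt (1 / b) ^ i * x"
    using xi_log_term_nonneg xi_log_term_le assms by auto
  show "summable (\<lambda>i. sqrt (1 / b) ^ i * x)"
    using summable_sqrt_inverse_power[OF assms(1)] by (rule summable_mult2)
qed

lemma xi_log_term_le_geometric:
  assumes "b \<ge> 1" "x \<ge> 0"
  shows "xi_log_term b x i
           \<le> (1 / b) ^ i * ln (1 + x) + (sqrt (1 / b) ^ i - (1 / b) ^ i) * (x / (1 + x))"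
proof -
  have bi: "b ^ i \<ge> 1" using assms by simp
  have "xi_log_term b x i \<le> (ln (1 + x) + (xi_coeff b i - 1) * (x / (1 + x))) / b ^ i"
    unfolding xi_log_term_def using bi xi_coeff_nonneg[OF assms(1)] assms(2)
    by (intro divide_right_mono ln_one_plus_mult_le) auto
  also have "\<dots> = (1 / b) ^ i * ln (1 + x) + (xi_coeff b i / b ^ i - (1 / b) ^ i) * (x / (1 + x))"
    using bi by (simp add: power_one_over add_divide_distrib diff_divide_distrib algebra_simps)
  also have "\<dots> \<le> (1 / b) ^ i * ln (1 + x) + (sqrt (1 / b) ^ i - (1 / b) ^ i) * (x / (1 + x))"
    using xi_coeff_div_power_le[OF assms(1)] assms(2)
    by (intro add_left_mono mult_right_mono) auto
  finally show ?thesis .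
qed

lemma suminf_xi_log_term_le:
  assumes "b > 1" "x \<ge> 0"
  shows "suminf (xi_log_term b x) \<le> b / (b - 1) * (x / (1 + x)) + b / (b - 1) * ln (1 + x)"
proof -
  define B where "B = b / (b - 1)"
  define q where "q = sqrt (1 / b)"
  define t where "t = x / (1 + x)"
  have t0: "t \<ge> 0" using assms by (simp add: t_def)
  have q: "0 < q" "q < 1" using assms by (auto simp: q_def)
  have "(\<lambda>i. (1 / b) ^ i) sums B"
    using geometric_sums[of "1 / b"] assms by (simp add: B_def field_simps)
  moreover have "(\<lambda>i. q ^ i) sums (1 / (1 - q))"
    using geometric_sums[of q] q by simp
  ultimately have "(\<lambda>i. (1 / b) ^ i * ln (1 + x) + (q ^ i - (1 / b) ^ i) * t)
                     sums (B * ln (1 + x) + (1 / (1 - q) - B) * t)"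
    by (intro sums_add sums_mult2 sums_diff)
  then have "suminf (xi_log_term b x) \<le> B * ln (1 + x) + (1 / (1 - q) - B) * t"
    using xi_log_term_le_geometric[of b x] summable_xi_log_term[OF assms] assms
    by (intro sums_le[OF _ summable_sums]) (auto simp: q_def t_def)
  also have "\<dots> \<le> B * t + B * ln (1 + x)"
    using inverse_one_minus_sqrt_inverse_le[OF assms(1)] t0
    unfolding q_def B_def by (smt (verit) mult_right_mono)
  finally show ?thesis by (simp add: B_def t_def)
qed

theorem xi_product_properties:
  fixes b :: real
  assumes b: "b > 1"
  defines "\<xi> \<equiv> \<lambda>x. \<Prod>i. (1 + xi_coeff b i * x) powr (1 / b ^ i)"
  shows "\<forall>x\<ge>0. convergent_prod (\<lambda>i. (1 + xi_coeff b i * x) powr (1 / b ^ i))"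
    and "continuous_on {0..} \<xi>"
    and "\<forall>x\<ge>0. \<xi> x \<le> exp (b / (b - 1) * (x / (1 + x))) * (1 + x) powr (b / (b - 1))"
proof -
  have factor_eq: "(\<lambda>i. (1 + xi_coeff b i * x) powr (1 / b ^ i)) = (\<lambda>i. exp (xi_log_term b x i))"
    if "x \<ge> 0" for x
    using xi_factor_eq_exp b that by auto
  have \<xi>_eq: "\<xi> x = exp (suminf (xi_log_term b x))" if "x \<ge> 0" for x
    unfolding \<xi>_def factor_eq[OF that] using summable_xi_log_term[OF b that] by (rule prodinf_exp)
  show "\<forall>x\<ge>0. convergent_prod (\<lambda>i. (1 + xi_coeff b i * x) powr (1 / b ^ i))"
    using factor_eq convergent_prod_exp summable_xi_log_term[OF b] by auto
  have "continuous_on {0..} (\<lambda>x. suminf (xi_log_term b x))"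
  proof (rule continuous_on_suminf_dominated_halfline)
    show "continuous_on {0..} (\<lambda>x. xi_log_term b x i)" for i
      unfolding xi_log_term_def using xi_factor_pos[of b _ i] b
      by (intro continuous_intros) (auto simp: less_imp_neq[THEN not_sym])
    show "norm (xi_log_term b x i) \<le> sqrt (1 / b) ^ i * x" if "x \<ge> 0" for x i
      using xi_log_term_nonneg xi_log_term_le b that by auto
  qed (rule summable_sqrt_inverse_power[OF b])
  then have "continuous_on {0..} (\<lambda>x. exp (suminf (xi_log_term b x)))"
    by (intro continuous_intros)
  then show "continuous_on {0..} \<xi>"
    by (rule continuous_on_cong[THEN iffD1, rotated 2]) (auto simp: \<xi>_eq)
  show "\<forall>x\<ge>0. \<xi> x \<le> exp (b / (b - 1) * (x / (1 + x))) * (1 + x) powr (b / (b - 1))"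
  proof (intro allI impI)
    fix x :: real assume x: "x \<ge> 0"
    have "\<xi> x \<le> exp (b / (b - 1) * (x / (1 + x)) + b / (b - 1) * ln (1 + x))"
      using \<xi>_eq[OF x] suminf_xi_log_term_le[OF b x] by simp
    also have "\<dots> = exp (b / (b - 1) * (x / (1 + x))) * (1 + x) powr (b / (b - 1))"
      using x by (simp add: exp_add powr_def mult.commute)
    finally show "\<xi> x \<le> exp (b / (b - 1) * (x / (1 + x))) * (1 + x) powr (b / (b - 1))" .
  qed
qed

theorem lemmaB1:
  fixes n :: nat
  assumes "n \<ge> 3"
  defines "\<beta> \<equiv> real n / (real n - 2)"
  defines "\<xi> \<equiv> \<lambda>x::real. \<Prod>i. (1 + \<beta> ^ i / sqrt (2 * \<beta> ^ i - 1) * x) powr (1 / \<beta> ^ i)"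
  shows "(\<forall>x\<ge>0. convergent_prod (\<lambda>i. (1 + \<beta> ^ i / sqrt (2 * \<beta> ^ i - 1) * x) powr (1 / \<beta> ^ i)))
         \<and> continuous_on {0..} \<xi>
         \<and> (\<forall>x\<ge>0. \<xi> x \<le> exp (real n / 2 * (x / (1 + x))) * (1 + x) powr (real n / 2))"
proof -
  have \<beta>: "\<beta> > 1" using assms(1) by (simp add: \<beta>_def field_simps)
  have B: "\<beta> / (\<beta> - 1) = real n / 2" using assms(1) by (simp add: \<beta>_def field_simps)
  show ?thesis
    using xi_product_properties[OF \<beta>] unfolding B \<xi>_def xi_coeff_def by simp
qed

end
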